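(* For all positive integers $n,q,d_h,d_m$ with $q\ge2$ and $d_m\le n$, $$A_{MU}(n,q,d_h,d_m)\le\frac{M(n,q,d)}{\lfloor n/d_m\rfloor},\qquad d=\min\{d_h,2d_m\}.$$
   Context: $\Sigma_q=\{0,\dots,q-1\}$, $d_H$ is Hamming distance, and for $\vec a\in\Sigma_q^n$, $\vec a_i^j=(a_i,\dots,a_j)$. A code $\mathcal C\subseteq\Sigma_q^n$ is a $(d_h,d_m)$-MU code if (1) any two distinct codewords are at Hamming distance at least $d_h$, and (2) for every two not necessarily distinct $\vec a,\vec b\in\mathcal C$ and every $i\in[1,n-1]$, $d_H(\vec a_1^i,\vec b_{n-i+1}^n)\ge\min\{i,d_m\}$. $A_{MU}(n,q,d_h,d_m)$ is the largest size of a $(d_h,d_m)$-MU code in $\Sigma_q^n$, and $M(n,q,d)$ is the largest size of a code in $\Sigma_q^n$ with minimum Hamming distance $d$. *)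

theory Defs
  imports Complex_Main
begin

definition words :: "nat \<Rightarrow> nat \<Rightarrow> nat list set" where
  "words q n = {xs. length xs = n \<and> set xs \<subseteq> {..<q}}"

text \<open>Hamming distance (for lists of equal length).\<close>
definition hdist :: "nat list \<Rightarrow> nat list \<Rightarrow> nat" where
  "hdist a b = card {i. i < length a \<and> a ! i \<noteq> b ! i}"

definition dist_code :: "nat \<Rightarrow> nat \<Rightarrow> nat \<Rightarrow> nat list set \<Rightarrow> bool" where
  "dist_code n q d C \<longleftrightarrow> C \<subseteq> words q n \<and>
     (\<forall>a\<in>C. \<forall>b\<in>C. a \<noteq> b \<longrightarrow> hdist a b \<ge> d)"

text \<open>(d_h,d_m)-MU code: prefix a_1^i is take i a, suffix b_{n-i+1}^n is drop (n-i) b.\<close>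
definition MU_code :: "nat \<Rightarrow> nat \<Rightarrow> nat \<Rightarrow> nat \<Rightarrow> nat list set \<Rightarrow> bool" where
  "MU_code n q dh dm C \<longleftrightarrow> dist_code n q dh C \<and>
     (\<forall>a\<in>C. \<forall>b\<in>C. \<forall>i. 1 \<le> i \<and> i \<le> n - 1 \<longrightarrow>
        hdist (take i a) (drop (n - i) b) \<ge> min i dm)"

definition A_MU :: "nat \<Rightarrow> nat \<Rightarrow> nat \<Rightarrow> nat \<Rightarrow> nat" where
  "A_MU n q dh dm = Max {card C | C. MU_code n q dh dm C}"

definition M_code :: "nat \<Rightarrow> nat \<Rightarrow> nat \<Rightarrow> nat" where
  "M_code n q d = Max {card C | C. dist_code n q d C}"

end

theory Submission
  imports Defs
begin

text \<open>Take a maximum MU code C and let k = \<lfloor>n/d_m\<rfloor>. The k cyclic shifts of every codeword by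
  multiples of d_m are pairwise at distance at least min{d_h, 2 d_m}: shifts of distinct codewords
  by the same amount inherit d_h, while a relative shift by u with d_m \<le> u \<le> n - d_m splits the
  comparison into a prefix-suffix overlap of length n - u and one of length u, each contributing at
  least d_m by the mutual-uncorrelation condition. These k |C| words are distinct, hence
  k A_MU \<le> M(n,q,d).\<close>

lemma hdist_conv_filter_zip:
  "length a = length b \<Longrightarrow> hdist a b = length (filter (\<lambda>(x, y). x \<noteq> y) (zip a b))"
  unfolding hdist_def length_filter_conv_card by (intro arg_cong[where f = card]) auto

lemma hdist_self [simp]: "hdist a a = 0"
  unfolding hdist_def by simp

lemma hdist_commute: "length a = length b \<Longrightarrow> hdist a b = hdist b a"
  unfolding hdist_def by (metis (no_types, lifting))

lemma hdist_append:
  "length a = length a' \<Longrightarrow> length b = length b' \<Longrightarrow>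
   hdist (a @ b) (a' @ b') = hdist a a' + hdist b b'"
  by (simp add: hdist_conv_filter_zip)

lemma length_filter_rotate: "length (filter P (rotate s xs)) = length (filter P xs)"
proof -
  have "length (filter P xs) = length (filter P (take (s mod length xs) xs @ drop (s mod length xs) xs))"
    by simp
  then show ?thesis by (simp add: rotate_drop_take del: append_take_drop_id)
qed

lemma hdist_rotate:
  assumes "length a = length b"
  shows "hdist (rotate s a) (rotate s b) = hdist a b"
proof -
  have "zip (rotate s a) (rotate s b) = rotate s (zip a b)"
    using assms by (simp add: rotate_drop_take drop_zip take_zip)
  then show ?thesis
    using assms by (simp add: hdist_conv_filter_zip length_filter_rotate)
qed

lemma hdist_rotate_split:
  assumes "length a = n" "length b = n" "u < n"
  shows "hdist a (rotate u b) = hdist (take (n - u) a) (drop u b) + hdist (take u b) (drop (n - u) a)"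
proof -
  have "hdist a (rotate u b) = hdist (take (n - u) a @ drop (n - u) a) (drop u b @ take u b)"
    using assms by (simp add: rotate_drop_take)
  also have "\<dots> = hdist (take (n - u) a) (drop u b) + hdist (drop (n - u) a) (take u b)"
    using assms by (intro hdist_append) auto
  finally show ?thesis
    using assms by (simp add: hdist_commute[of "drop (n - u) a"])
qed

lemma finite_words: "finite (words q n)"
proof -
  have "words q n = {xs. set xs \<subseteq> {..<q} \<and> length xs = n}"
    unfolding words_def by auto
  then show ?thesis
    using finite_lists_length_eq[of "{..<q}" n] by simp
qed

lemma dist_code_card_le: "dist_code n q d C \<Longrightarrow> card C \<le> card (words q n)"
  unfolding dist_code_def by (intro card_mono finite_words) auto

lemma card_le_M_code: "dist_code n q d C \<Longrightarrow> card C \<le> M_code n q d"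
  unfolding M_code_def
  by (rule Max_ge) (auto intro: finite_subset[of _ "{..card (words q n)}"] dest: dist_code_card_le)

lemma A_MU_attained: obtains C where "MU_code n q dh dm C" "card C = A_MU n q dh dm"
proof -
  let ?S = "{card C | C. MU_code n q dh dm C}"
  have "finite ?S"
    by (rule finite_subset[of _ "{..card (words q n)}"])
       (auto simp: MU_code_def dest: dist_code_card_le)
  moreover have "MU_code n q dh dm {}"
    unfolding MU_code_def dist_code_def by simp
  then have "?S \<noteq> {}" by blast
  ultimately have "A_MU n q dh dm \<in> ?S"
    unfolding A_MU_def by (rule Max_in)
  then show ?thesis using that by auto
qed

lemma MU_code_hdist_rotate:
  assumes MU: "MU_code n q dh dm C" and "a \<in> C" "b \<in> C"
    and "dm \<le> u" "u + dm \<le> n" "0 < dm"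
  shows "2 * dm \<le> hdist a (rotate u b)"
proof -
  have "length a = n" "length b = n"
    using MU \<open>a \<in> C\<close> \<open>b \<in> C\<close> by (auto simp: MU_code_def dist_code_def words_def)
  then have split: "hdist a (rotate u b) =
      hdist (take (n - u) a) (drop (n - (n - u)) b) + hdist (take u b) (drop (n - u) a)"
    using assms by (simp add: hdist_rotate_split)
  have overlap: "min i dm \<le> hdist (take i x) (drop (n - i) y)"
    if "x \<in> C" "y \<in> C" "1 \<le> i" "i \<le> n - 1" for x y i
    using MU that unfolding MU_code_def by blast
  have "dm \<le> hdist (take (n - u) a) (drop (n - (n - u)) b)"
    using overlap[OF \<open>a \<in> C\<close> \<open>b \<in> C\<close>, of "n - u"] assms by simp
  moreover have "dm \<le> hdist (take u b) (drop (n - u) a)"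
    using overlap[OF \<open>b \<in> C\<close> \<open>a \<in> C\<close>, of u] assms by simp
  ultimately show ?thesis using split by simp
qed

definition shift :: "nat \<Rightarrow> nat list \<times> nat \<Rightarrow> nat list" where
  "shift dm = (\<lambda>(a, j). rotate (j * dm) a)"

lemma hdist_shift_MU_code:
  assumes MU: "MU_code n q dh dm C" and "0 < dm"
    and x: "x \<in> C \<times> {..<n div dm}" and y: "y \<in> C \<times> {..<n div dm}" and "x \<noteq> y"
  shows "min dh (2 * dm) \<le> hdist (shift dm x) (shift dm y)"
proof -
  have shifted_pair: "2 * dm \<le> hdist (rotate (j * dm) a) (rotate (l * dm) b)"
    if "a \<in> C" "b \<in> C" "j < l" "l < n div dm" for a b j l
  proof -
    have len: "length a = n" "length (rotate ((l - j) * dm) b) = n"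
      using MU that by (auto simp: MU_code_def dist_code_def words_def)
    have "l * dm = j * dm + (l - j) * dm"
      using \<open>j < l\<close> by (simp add: add_mult_distrib[symmetric])
    then have "rotate (l * dm) b = rotate (j * dm) (rotate ((l - j) * dm) b)"
      by (simp add: rotate_rotate add.commute)
    then have "hdist (rotate (j * dm) a) (rotate (l * dm) b) = hdist a (rotate ((l - j) * dm) b)"
      using len by (simp add: hdist_rotate)
    moreover have "(l - j) * dm + dm \<le> n"
    proof -
      have "(l - j) * dm + dm = (l - j + 1) * dm" by simp
      also have "\<dots> \<le> (n div dm) * dm"
        using that by (intro mult_right_mono) auto
      finally have "(l - j) * dm + dm \<le> (n div dm) * dm" .
      moreover have "(n div dm) * dm \<le> n" by simp
      ultimately show ?thesis by linarith
    qed
    ultimately show ?thesis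
      using MU_code_hdist_rotate[OF MU \<open>a \<in> C\<close> \<open>b \<in> C\<close>] that \<open>0 < dm\<close> by simp
  qed
  obtain a j b l where xy: "x = (a, j)" "y = (b, l)" and ab: "a \<in> C" "b \<in> C"
    and jl: "j < n div dm" "l < n div dm"
    using x y by auto
  have len: "length a = n" "length b = n"
    using MU ab by (auto simp: MU_code_def dist_code_def words_def)
  consider "j = l" | "j < l" | "l < j" by linarith
  then show ?thesis
  proof cases
    case 1
    then have "dh \<le> hdist a b"
      using MU ab \<open>x \<noteq> y\<close> xy by (auto simp: MU_code_def dist_code_def)
    then show ?thesis
      using 1 xy len by (simp add: shift_def hdist_rotate)
  next
    case 2
    then show ?thesis
      using shifted_pair[OF ab 2 jl(2)] xy by (simp add: shift_def)
  next
    case 3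
    then show ?thesis
      using shifted_pair[OF ab(2,1) 3 jl(1)] xy len
      by (simp add: shift_def hdist_commute[of "rotate (l * dm) b"])
  qed
qed

lemma shift_code:
  assumes MU: "MU_code n q dh dm C" and "0 < dh" "0 < dm"
  shows "dist_code n q (min dh (2 * dm)) (shift dm ` (C \<times> {..<n div dm}))"
    and "card (shift dm ` (C \<times> {..<n div dm})) = card C * (n div dm)"
proof -
  have W: "C \<subseteq> words q n"
    using MU unfolding MU_code_def dist_code_def by blast
  show "dist_code n q (min dh (2 * dm)) (shift dm ` (C \<times> {..<n div dm}))"
    unfolding dist_code_def
  proof (intro conjI ballI impI)
    show "shift dm ` (C \<times> {..<n div dm}) \<subseteq> words q n"
      using W by (fastforce simp: shift_def words_def)
  next
    fix u v assume "u \<in> shift dm ` (C \<times> {..<n div dm})" "v \<in> shift dm ` (C \<times> {..<n div dm})" "u \<noteq> v"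
    then show "min dh (2 * dm) \<le> hdist u v"
      using hdist_shift_MU_code[OF MU \<open>0 < dm\<close>] by blast
  qed
  have "inj_on (shift dm) (C \<times> {..<n div dm})"
  proof (rule inj_onI, rule ccontr)
    fix x y assume "x \<in> C \<times> {..<n div dm}" "y \<in> C \<times> {..<n div dm}" "shift dm x = shift dm y" "x \<noteq> y"
    then show False
      using hdist_shift_MU_code[OF MU \<open>0 < dm\<close>] assms by fastforce
  qed
  moreover have "finite C"
    using W finite_words finite_subset by blast
  ultimately show "card (shift dm ` (C \<times> {..<n div dm})) = card C * (n div dm)"
    by (simp add: card_image card_cartesian_product)
qed

theorem theorem3:
  fixes n q dh dm :: nat
  assumes "0 < n" "2 \<le> q" "0 < dh" "0 < dm" "dm \<le> n"
  shows "real (A_MU n q dh dm) \<le> real (M_code n q (min dh (2 * dm))) / real (n div dm)"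
proof -
  obtain C where MU: "MU_code n q dh dm C" and card_C: "card C = A_MU n q dh dm"
    by (rule A_MU_attained)
  have "A_MU n q dh dm * (n div dm) \<le> M_code n q (min dh (2 * dm))"
    using card_le_M_code[OF shift_code(1)[OF MU]] shift_code(2)[OF MU] card_C assms by metis
  then have "real (A_MU n q dh dm) * real (n div dm) \<le> real (M_code n q (min dh (2 * dm)))"
    by (metis of_nat_le_iff of_nat_mult)
  moreover have "0 < n div dm"
    using assms by (simp add: div_greater_zero_iff)
  ultimately show ?thesis
    by (simp add: pos_le_divide_eq)
qed

end
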